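(* In any execution of Algorithm FS (with $T\ge 4$), let $v,w$ be active neighboring nodes in round $t$ with $d_t(v,w)\le 1$, and let $t'>t$ be the first round with $d_{t'}(v,w)>1$. Then $d_{t'+1}(v,w)\le 1$.
   Context: Model (beeping model with arbitrary activations). $G=(V,E)$ finite connected undirected graph; synchronous rounds; in each round each active node either beeps or listens; a listening node learns only whether at least one neighbor beeped. $T\ge 4$; checkpoints $\mathit{CP}=\{c\in\mathbb{N}_0: c\equiv 0\pmod 4,\ T-c>3\}$. Algorithm FS. Each node $v$ stores $\delta(v)\in\{0,\dots,T-1\}$, $\mathit{State}(v)\in\{\mathit{Inactive},\mathit{Beep},\mathit{Listen}\}$, $\mathit{Induced}(v)\in\{\mathit{true},\mathit{false}\}$. Initially all nodes are Inactive. A node $v$ is activated in round $t$ if the adversary activates it in round $t$, or $v$ is inactive and some neighbor beeps in round $t-1$; then at the beginning of round $t$, $\delta(v)=1$, $\mathit{State}(v)=\mathit{Beep}$, $\mathit{Induced}(v)=\mathit{true}$. In each round each active node $v$, according to its state at the beginning of the round: (1) if $\mathit{State}(v)=\mathit{Beep}$: beeps; $\delta(v)\gets\delta(v)+1\bmod T$; $\mathit{State}(v)\gets\mathit{Listen}$; (2) if $\mathit{State}(v)=\mathit{Listen}$ and some neighbor beeps: if $\delta(v)\equiv c-1\pmod T$ for some $c\in\mathit{CP}$, then $\delta(v)\gets\delta(v)+2\bmod T$, $\mathit{State}(v)\gets\mathit{Beep}$, $\mathit{Induced}(v)\gets\mathit{true}$; else $\delta(v)\gets\delta(v)+1\bmod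 T$; (3) if $\mathit{State}(v)=\mathit{Listen}$ and no neighbor beeps: $\delta(v)\gets\delta(v)+1\bmod T$; then if ($\mathit{Induced}(v)=\mathit{true}$ and new $\delta(v)\in\mathit{CP}$) or new $\delta(v)=0$: $\mathit{State}(v)\gets\mathit{Beep}$, $\mathit{Induced}(v)\gets\mathit{false}$. Virtual counter: if $v$ is activated in round $t_0$ then $c_{t_0}(v)=0$, and $c_{t+1}(v)=c_t(v)+a$, where $a\in\{1,2\}$ is the amount added to $\delta(v)$ (before reduction mod $T$) in round $t$. $d_t(v,w)=|c_t(v)-c_t(w)|$. *)

theory Defs
  imports Main
begin

datatype nstate = Inactive | Beep | Listen

text \<open>Local state of a node: State, delta, Induced, and the virtual counter c.\<close>
record node =
  state :: nstate
  dl :: nat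
  induced :: bool
  cnt :: nat

definition CP :: "nat \<Rightarrow> nat set" where
  "CP T = {c. c mod 4 = 0 \<and> c + 3 < T}"

definition inactive_node :: node where
  "inactive_node = \<lparr>state = Inactive, dl = 0, induced = False, cnt = 0\<rparr>"

definition activated_node :: node where
  "activated_node = \<lparr>state = Beep, dl = 1, induced = True, cnt = 0\<rparr>"

definition fs_step :: "nat \<Rightarrow> bool \<Rightarrow> node \<Rightarrow> node" where
  "fs_step T heard n =
     (case state n of
        Inactive \<Rightarrow> n
      | Beep \<Rightarrow> n\<lparr>dl := (dl n + 1) mod T, state := Listen, cnt := cnt n + 1\<rparr>
      | Listen \<Rightarrow>
          (if heard then
             (if (\<exists>c\<in>CP T. int (dl n) mod int T = (int c - 1) mod int T)
              then n\<lparr>dl := (dl n + 2) mod T, state := Beep, induced := True, cnt := cnt n + 2\<rparr>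
              else n\<lparr>dl := (dl n + 1) mod T, cnt := cnt n + 1\<rparr>)
           else
             (let d' = (dl n + 1) mod T in
              if (induced n \<and> d' \<in> CP T) \<or> d' = 0
              then n\<lparr>dl := d', state := Beep, induced := False, cnt := cnt n + 1\<rparr>
              else n\<lparr>dl := d', cnt := cnt n + 1\<rparr>)))"

definition beeps :: "('v \<Rightarrow> node) \<Rightarrow> 'v \<Rightarrow> bool" where
  "beeps q u \<longleftrightarrow> state (q u) = Beep"

text \<open>conf E T adv t v: configuration of v at the beginning of round t, after the
  activations of round t have taken effect. adv t v: the adversary activates v in round t
  (only effective if v is inactive).\<close>
fun conf :: "('v \<times> 'v) set \<Rightarrow> nat \<Rightarrow> (nat \<Rightarrow> 'v \<Rightarrow> bool) \<Rightarrow> nat \<Rightarrow> 'v \<Rightarrow> node" where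
  "conf E T adv 0 = (\<lambda>v. if adv 0 v then activated_node else inactive_node)"
| "conf E T adv (Suc t) =
     (let q = conf E T adv t;
          heard = (\<lambda>v. \<exists>u. (v, u) \<in> E \<and> beeps q u);
          p = (\<lambda>v. fs_step T (heard v) (q v))
      in (\<lambda>v. if state (p v) = Inactive \<and> (adv (Suc t) v \<or> heard v)
              then activated_node else p v))"

definition active :: "('v \<times> 'v) set \<Rightarrow> nat \<Rightarrow> (nat \<Rightarrow> 'v \<Rightarrow> bool) \<Rightarrow> nat \<Rightarrow> 'v \<Rightarrow> bool" where
  "active E T adv t v \<longleftrightarrow> state (conf E T adv t v) \<noteq> Inactive"

definition dist_c :: "('v \<times> 'v) set \<Rightarrow> nat \<Rightarrow> (nat \<Rightarrow> 'v \<Rightarrow> bool) \<Rightarrow> nat \<Rightarrow> 'v \<Rightarrow> 'v \<Rightarrow> nat" where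
  "dist_c E T adv t v w = nat \<bar>int (cnt (conf E T adv t v)) - int (cnt (conf E T adv t w))\<bar>"

end

theory Submission imports Defs begin

text \<open>Along an execution every active node satisfies \<open>\<delta> = (c + 1) mod T\<close>, and its
  virtual counter grows by 1 or 2 per round, by 2 exactly when it listens, hears a beep
  and \<open>\<delta>\<close> is one below a checkpoint. So if the distance of neighbours \<open>a\<close>, \<open>b\<close>
  jumps from at most 1 to 2, then \<open>a\<close> was one ahead, made the double step and now beeps,
  while \<open>b\<close> made a single step and now holds the value of \<open>\<delta>\<close> from which \<open>a\<close> jumped.
  That value is one below a checkpoint, so \<open>b\<close> did not start beeping; in the next round
  \<open>b\<close> hears \<open>a\<close> and jumps by 2 while \<open>a\<close> advances by 1.\<close>

definition before_checkpoint :: "nat \<Rightarrow> nat \<Rightarrow> bool" where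
  "before_checkpoint T d \<longleftrightarrow> (\<exists>c\<in>CP T. int d mod int T = (int c - 1) mod int T)"

definition hears :: "('v \<times> 'v) set \<Rightarrow> ('v \<Rightarrow> node) \<Rightarrow> 'v \<Rightarrow> bool" where
  "hears E q v \<longleftrightarrow> (\<exists>u. (v, u) \<in> E \<and> beeps q u)"

lemma before_checkpoint_not_checkpoint:
  assumes "before_checkpoint T d" and "d < T"
  shows "d \<notin> CP T" and "d \<noteq> 0"
proof -
  obtain c where "c \<in> CP T" and d: "int d = (int c - 1) mod int T"
    using assms by (auto simp: before_checkpoint_def)
  then have c: "c mod 4 = 0" "c + 3 < T"
    by (simp_all add: CP_def)
  have "d = T - 1 \<or> (d = c - 1 \<and> 0 < c)"
  proof (cases "c = 0")
    case True
    then show ?thesis using d c(2) by (simp add: zmod_minus1)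
  next
    case False
    then show ?thesis using d c by auto
  qed
  moreover have "(c - 1) mod 4 = 3" if "0 < c"
  proof -
    have "Suc (c - 1) mod 4 = 0" using c(1) that by simp
    then show ?thesis by (simp add: mod_Suc split: if_splits)
  qed
  ultimately show "d \<notin> CP T" "d \<noteq> 0"
    using c(2) by (auto simp: CP_def)
qed

lemma fs_step_not_Inactive: "state n \<noteq> Inactive \<Longrightarrow> state (fs_step T h n) \<noteq> Inactive"
  by (auto simp: fs_step_def Let_def split: nstate.splits)

lemma fs_step_cnt_cases:
  "state n \<noteq> Inactive \<Longrightarrow>
     cnt (fs_step T h n) = cnt n + 1 \<or> cnt (fs_step T h n) = cnt n + 2"
  by (auto simp: fs_step_def Let_def split: nstate.splits)

lemma fs_step_dl_cnt:
  assumes "state n \<noteq> Inactive" and "dl n = (cnt n + 1) mod T" and "0 < T"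
  shows "dl (fs_step T h n) = (cnt (fs_step T h n) + 1) mod T"
  using assms by (auto simp: fs_step_def Let_def mod_simps split: nstate.splits)

lemma fs_step_cnt_add_2_iff:
  "state n \<noteq> Inactive \<Longrightarrow> cnt (fs_step T h n) = cnt n + 2 \<longleftrightarrow>
     state n = Listen \<and> h \<and> before_checkpoint T (dl n)"
  by (auto simp: fs_step_def before_checkpoint_def Let_def split: nstate.splits)

lemma fs_step_cnt_add_2_Beep:
  "state n \<noteq> Inactive \<Longrightarrow> cnt (fs_step T h n) = cnt n + 2 \<Longrightarrow> state (fs_step T h n) = Beep"
  by (auto simp: fs_step_def Let_def split: nstate.splits if_splits)

lemma fs_step_cnt_add_1_Beep:
  assumes "cnt (fs_step T h n) = cnt n + 1" and "state (fs_step T h n) = Beep"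
  shows "(dl n + 1) mod T \<in> CP T \<or> (dl n + 1) mod T = 0"
  using assms by (auto simp: fs_step_def Let_def split: nstate.splits if_splits)

lemma fs_step_Beep_cnt: "state n = Beep \<Longrightarrow> cnt (fs_step T h n) = cnt n + 1"
  by (simp add: fs_step_def)

lemma fs_step_gap_opening:
  assumes "0 < T" and "state X \<noteq> Inactive" and "state Y \<noteq> Inactive"
    and dl_X: "dl X = (cnt X + 1) mod T" and dl_Y: "dl Y = (cnt Y + 1) mod T"
    and "cnt X \<le> cnt Y + 1" and "cnt (fs_step T hX X) \<ge> cnt (fs_step T hY Y) + 2"
  shows "cnt (fs_step T hX X) = cnt (fs_step T hY Y) + 2"
    and "state (fs_step T hX X) = Beep"
    and "state (fs_step T hY Y) = Listen"
    and "before_checkpoint T (dl (fs_step T hY Y))"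
proof -
  let ?X' = "fs_step T hX X" and ?Y' = "fs_step T hY Y"
  have X': "cnt ?X' = cnt X + 2" and Y': "cnt ?Y' = cnt Y + 1" and XY: "cnt X = cnt Y + 1"
    using fs_step_cnt_cases[of X T hX] fs_step_cnt_cases[of Y T hY] assms(2,3,6,7) by auto
  then show "cnt ?X' = cnt ?Y' + 2" by simp
  show "state ?X' = Beep"
    using fs_step_cnt_add_2_Beep assms(2) X' .
  have jump: "before_checkpoint T (dl X)"
    using fs_step_cnt_add_2_iff assms(2) X' by blast
  have same_dl: "dl ?Y' = dl X"
    using fs_step_dl_cnt[OF assms(3) dl_Y assms(1)] dl_X Y' XY by simp
  then show "before_checkpoint T (dl ?Y')"
    using jump by simp
  have "dl X \<notin> CP T" "dl X \<noteq> 0"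
    using before_checkpoint_not_checkpoint[OF jump] dl_X assms(1) by simp_all
  moreover have "(dl Y + 1) mod T = dl X"
    using dl_X dl_Y XY by (simp add: mod_simps)
  ultimately have "state ?Y' \<noteq> Beep"
    using fs_step_cnt_add_1_Beep[OF Y'] by auto
  then show "state ?Y' = Listen"
    using fs_step_not_Inactive[OF assms(3)] by (cases "state ?Y'") auto
qed

declare conf.simps(2) [simp del]

lemma conf_Suc_of_active:
  assumes "active E T adv s v"
  shows "conf E T adv (Suc s) v = fs_step T (hears E (conf E T adv s) v) (conf E T adv s v)"
  using assms fs_step_not_Inactive[of "conf E T adv s v"]
  by (simp add: conf.simps(2) active_def hears_def Let_def)

lemma active_Suc: "active E T adv s v \<Longrightarrow> active E T adv (Suc s) v"
  using conf_Suc_of_active fs_step_not_Inactive by (metis active_def)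

lemma active_mono:
  assumes "active E T adv s v" and "s \<le> s'"
  shows "active E T adv s' v"
  using assms(2,1) by (induction rule: dec_induct) (auto intro: active_Suc)

lemma conf_Suc_of_inactive:
  assumes "\<not> active E T adv s v" and "active E T adv (Suc s) v"
  shows "conf E T adv (Suc s) v = activated_node"
  using assms by (auto simp: conf.simps(2) active_def Let_def fs_step_def split: if_splits)

lemma dl_conf_eq_cnt:
  assumes "2 \<le> T" and "active E T adv s v"
  shows "dl (conf E T adv s v) = (cnt (conf E T adv s v) + 1) mod T"
  using assms(2)
proof (induction s arbitrary: v)
  case 0
  then show ?case
    using assms(1) by (cases "adv 0 v") (auto simp: active_def activated_node_def inactive_node_def)
next
  case (Suc s)
  show ?case
  proof (cases "active E T adv s v")
    case True
    then show ?thesis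
      using fs_step_dl_cnt Suc.IH[OF True] conf_Suc_of_active[OF True] assms(1)
      by (simp add: active_def)
  next
    case False
    then show ?thesis
      using conf_Suc_of_inactive[OF False Suc.prems] assms(1) by (simp add: activated_node_def)
  qed
qed

lemma cnt_gap_closes:
  assumes "2 \<le> T" and "(b, a) \<in> E" and act_a: "active E T adv s a" and act_b: "active E T adv s b"
    and "cnt (conf E T adv s a) \<le> cnt (conf E T adv s b) + 1"
    and "cnt (conf E T adv (Suc s) a) \<ge> cnt (conf E T adv (Suc s) b) + 2"
  shows "cnt (conf E T adv (Suc (Suc s)) a) = cnt (conf E T adv (Suc (Suc s)) b) + 1"
proof -
  let ?p = "conf E T adv s" and ?q = "conf E T adv (Suc s)"
  note step_a = conf_Suc_of_active[OF act_a] and step_b = conf_Suc_of_active[OF act_b]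
  have "cnt (fs_step T (hears E ?p a) (?p a)) \<ge> cnt (fs_step T (hears E ?p b) (?p b)) + 2"
    using assms(6) step_a step_b by simp
  from fs_step_gap_opening[OF _ _ _ dl_conf_eq_cnt dl_conf_eq_cnt assms(5) this]
  have gap: "cnt (?q a) = cnt (?q b) + 2" "state (?q a) = Beep" "state (?q b) = Listen"
      "before_checkpoint T (dl (?q b))"
    using assms(1) act_a act_b unfolding step_a step_b by (simp_all add: active_def)
  have "hears E ?q b"
    using assms(2) gap(2) by (auto simp: hears_def beeps_def)
  then have "cnt (fs_step T (hears E ?q b) (?q b)) = cnt (?q b) + 2"
    using fs_step_cnt_add_2_iff[of "?q b"] gap(3,4) by simp
  then have "cnt (conf E T adv (Suc (Suc s)) b) = cnt (?q b) + 2"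
    unfolding conf_Suc_of_active[OF active_Suc[OF act_b]] .
  moreover have "cnt (conf E T adv (Suc (Suc s)) a) = cnt (?q a) + 1"
    unfolding conf_Suc_of_active[OF active_Suc[OF act_a]] using fs_step_Beep_cnt gap(2) .
  ultimately show ?thesis
    using gap(1) by simp
qed

lemma dist_c_le_1_iff:
  "dist_c E T adv s v w \<le> 1 \<longleftrightarrow>
     cnt (conf E T adv s v) \<le> cnt (conf E T adv s w) + 1 \<and>
     cnt (conf E T adv s w) \<le> cnt (conf E T adv s v) + 1"
  by (auto simp: dist_c_def)

lemma dist_c_recovers:
  assumes "sym E" and "2 \<le> T" and "(v, w) \<in> E"
    and "active E T adv s v" and "active E T adv s w"
    and "dist_c E T adv s v w \<le> 1" and "dist_c E T adv (Suc s) v w > 1"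
  shows "dist_c E T adv (Suc (Suc s)) v w \<le> 1"
proof -
  let ?c = "\<lambda>s x. cnt (conf E T adv s x)"
  have "(w, v) \<in> E"
    using assms(1,3) by (auto simp: sym_def)
  have before: "?c s v \<le> ?c s w + 1" "?c s w \<le> ?c s v + 1"
    using assms(6) unfolding dist_c_le_1_iff by simp_all
  consider "?c (Suc s) v \<ge> ?c (Suc s) w + 2" | "?c (Suc s) w \<ge> ?c (Suc s) v + 2"
    using assms(7) unfolding dist_c_le_1_iff not_le[symmetric] by linarith
  then show ?thesis
  proof cases
    case 1
    from cnt_gap_closes[OF assms(2) \<open>(w, v) \<in> E\<close> assms(4,5) before(1) this]
    show ?thesis unfolding dist_c_le_1_iff by simp
  next
    case 2
    from cnt_gap_closes[OF assms(2,3,5,4) before(2) this]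
    show ?thesis unfolding dist_c_le_1_iff by simp
  qed
qed

theorem mainTheorem10:
  fixes E :: "('v::finite \<times> 'v) set" and T :: nat and adv :: "nat \<Rightarrow> 'v \<Rightarrow> bool"
    and v w :: 'v and t t' :: nat
  assumes "sym E" and "irrefl E" and "\<forall>x y. (x, y) \<in> E\<^sup>*"
    and "T \<ge> 4"
    and "(v, w) \<in> E"
    and "active E T adv t v" and "active E T adv t w"
    and "dist_c E T adv t v w \<le> 1"
    and "t < t'" and "dist_c E T adv t' v w > 1"
    and "\<forall>s. t < s \<and> s < t' \<longrightarrow> dist_c E T adv s v w \<le> 1"
  shows "dist_c E T adv (Suc t') v w \<le> 1"
proof -
  obtain s where t': "t' = Suc s" and "t \<le> s"
    using \<open>t < t'\<close> by (cases t') auto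
  have "dist_c E T adv s v w \<le> 1"
    using assms(8,11) t' \<open>t \<le> s\<close> by (cases "s = t") auto
  moreover have "active E T adv s v" "active E T adv s w"
    using active_mono[OF assms(6)] active_mono[OF assms(7)] \<open>t \<le> s\<close> by simp_all
  ultimately show ?thesis
    using dist_c_recovers[OF assms(1) _ assms(5)] assms(4,10) unfolding t' by simp
qed

end
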